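(* Let $n\in\mathbb{N}$ and let $a=3$ or $a>5$ (real). Let $E_n(a,1)$ be the $(n+1)\times n$ matrix whose $(i,j)$ entry is $-a$ if $i=j$, $1$ if $j=i+1$, $a$ if $i=j+1$, $-1$ if $i=j+2$, and $0$ otherwise, and let $B_n(a,1)$ be the $(n+3)\times n$ matrix whose first row is $(1,0,\dots,0)$, whose rows $2,\dots,n+2$ are the rows of $E_n(a,1)$ in order, and whose last row is $(0,\dots,0,-1)$. For $1\le i<j<k\le n+3$, let $B_n(a,1)^{i,j,k}$ be the $n\times n$ matrix obtained by deleting the $i$-th, $j$-th and $k$-th rows of $B_n(a,1)$. Then $|B_n(a,1)^{i,j,k}|\neq0$.
   Context: $|M|$ denotes the determinant of a square matrix $M$. *)

theory Defs
  imports "Jordan_Normal_Form.Determinant" "Jordan_Normal_Form.DL_Submatrix"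
begin

definition E_mat :: "nat \<Rightarrow> real \<Rightarrow> real mat" where
  "E_mat n a = mat (n+1) n (\<lambda>(r,c).
      if r = c then - a
      else if c = r + 1 then 1
      else if r = c + 1 then a
      else if r = c + 2 then -1
      else 0)"

definition B_mat :: "nat \<Rightarrow> real \<Rightarrow> real mat" where
  "B_mat n a = mat (n+3) n (\<lambda>(r,c).
      if r = 0 then (if c = 0 then 1 else 0)
      else if r \<le> n + 1 then E_mat n a $$ (r - 1, c)
      else (if c = n - 1 then -1 else 0))"

text \<open>Delete rows i, j, k (1-based) of B_n(a,1).\<close>
definition B_del :: "nat \<Rightarrow> real \<Rightarrow> nat \<Rightarrow> nat \<Rightarrow> nat \<Rightarrow> real mat" where
  "B_del n a i j k = submatrix (B_mat n a) ({0..<n+3} - {i-1, j-1, k-1}) {0..<n}"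

end

(*
  B_n(a,1) is the matrix of multiplication by P(x) = 1 - a x + a x^2 - x^3, mapping coefficient
  vectors of polynomials of degree < n to those of degree < n + 3.  Every sequence g with
  g(c) - a g(c+1) + a g(c+2) - g(c+3) = 0 is orthogonal to all columns.  If deleting rows i, j, k
  left a singular matrix, a nonzero kernel vector q would make P q supported on these three rows
  and orthogonal to all such g.  As P(x) = (1 - x) (x^2 - (a - 1) x + 1), the solutions include
  1, c, c^2 for a = 3 and 1, rho^c, rho^(-c) with rho > 1 for a > 3; in both cases they separate
  any three indices by a Vandermonde argument.  Hence P q = 0, and q = 0 since P(0) <> 0.
*)
theory Submission
  imports Defs
begin

lemma singular_row_submatrix_obtains_kernel_vec:
  fixes A :: "'a::idom mat"
  assumes A: "A \<in> carrier_mat m n" and I: "I \<subseteq> {..<m}" "card I = n"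
    and det: "det (submatrix A I {0..<n}) = 0"
  obtains v where "v \<in> carrier_vec n" "v \<noteq> 0\<^sub>v n" "\<And>r. r \<in> I \<Longrightarrow> (A *\<^sub>v v) $ r = 0"
proof -
  let ?M = "submatrix A I {0..<n}"
  have "{r. r < dim_row A \<and> r \<in> I} = I" "{c. c < dim_col A \<and> c \<in> {0..<n}} = {0..<n}"
    using A I by auto
  then have "dim_row ?M = n" "dim_col ?M = n"
    unfolding dim_submatrix using I(2) by simp_all
  then have M: "?M \<in> carrier_mat n n"
    by (rule carrier_matI)
  obtain v where v: "v \<in> carrier_vec n" "v \<noteq> 0\<^sub>v n" "?M *\<^sub>v v = 0\<^sub>v n"
    using det det_0_iff_vec_prod_zero[OF M] by auto
  have "(A *\<^sub>v v) $ r = 0" if r: "r \<in> I" for r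
  proof -
    define s where "s = card {x\<in>I. x < r}"
    have "finite I" "{x\<in>I. x < r} \<subset> I"
      using finite_subset[OF I(1)] r by auto
    then have s: "s < n"
      unfolding s_def using I(2) by (metis psubset_card_mono)
    have r_lt: "r < dim_row A"
      using r I A by auto
    have "row ?M s = row A r"
    proof (rule eq_vecI)
      fix c assume "c < dim_vec (row A r)"
      then have c: "c < n" using A by simp
      then have "card {x\<in>{0..<n}. x < c} = c"
        by (simp add: Collect_conj_eq lessThan_def[symmetric] Int_absorb1 lessThan_atLeast0)
      then have "?M $$ (s, c) = A $$ (r, c)"
        using submatrix_index_card[OF r_lt _ r, of c "{0..<n}"] c A unfolding s_def by simp
      then show "row ?M s $ c = row A r $ c"
        using M s c r_lt A by simp
    qed (use A M in simp)
    then have "(A *\<^sub>v v) $ r = (?M *\<^sub>v v) $ s"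
      using r_lt M s by simp
    then show ?thesis
      using v(3) s by simp
  qed
  then show thesis
    using that v(1,2) by blast
qed

lemma vandermonde3_eq_0:
  fixes x y z w1 w2 w3 :: "'a::idom"
  assumes "x \<noteq> y" "x \<noteq> z" "y \<noteq> z"
    and e0: "w1 + w2 + w3 = 0"
    and e1: "w1 * x + w2 * y + w3 * z = 0"
    and e2: "w1 * x^2 + w2 * y^2 + w3 * z^2 = 0"
  shows "w1 = 0 \<and> w2 = 0 \<and> w3 = 0"
proof -
  have "(y - x) * (z - x) * (z - y) * w1
      = (y * z^2 - z * y^2) * (w1 + w2 + w3) - (z^2 - y^2) * (w1 * x + w2 * y + w3 * z)
        + (z - y) * (w1 * x^2 + w2 * y^2 + w3 * z^2)"
    by (simp add: algebra_simps power2_eq_square)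
  then have w1: "w1 = 0"
    using assms by simp
  then have "(z - y) * w3 = 0"
    using e0 e1 by (simp add: algebra_simps eq_neg_iff_add_eq_0[symmetric])
  then show ?thesis
    using w1 e0 assms(3) by simp
qed

text \<open>Column c holds the coefficients of x^c p: the matrix of q \<mapsto> p q on coefficient vectors.\<close>
definition poly_mult_mat :: "nat \<Rightarrow> nat \<Rightarrow> 'a::zero poly \<Rightarrow> 'a mat" where
  "poly_mult_mat m n p = mat m n (\<lambda>(r, c). if c \<le> r then coeff p (r - c) else 0)"

lemma poly_mult_mat_mult_vec_index:
  assumes "r < m" "dim_vec v = n"
  shows "(poly_mult_mat m n p *\<^sub>v v) $ r = (\<Sum>c<n. (if c \<le> r then coeff p (r - c) else 0) * v $ c)"
  using assms by (simp add: poly_mult_mat_def scalar_prod_def lessThan_atLeast0)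

lemma poly_mult_mat_mult_vec_eq_0:
  fixes p :: "'a::idom poly"
  assumes "coeff p 0 \<noteq> 0" "n \<le> m" "v \<in> carrier_vec n"
    and "\<And>r. r < n \<Longrightarrow> (poly_mult_mat m n p *\<^sub>v v) $ r = 0"
  shows "v = 0\<^sub>v n"
proof -
  have "v $ r = 0" if "r < n" for r
    using that
  proof (induction r rule: less_induct)
    case (less r)
    have "(poly_mult_mat m n p *\<^sub>v v) $ r = (\<Sum>c<n. (if c \<le> r then coeff p (r - c) else 0) * v $ c)"
      using less assms(2,3) by (simp add: poly_mult_mat_mult_vec_index)
    also have "\<dots> = (\<Sum>c<n. if c = r then coeff p 0 * v $ c else 0)"
      using less.IH by (intro sum.cong) auto
    finally show ?case
      using assms(1,4) less by simp
  qed
  then show ?thesis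
    using assms(3) by (intro eq_vecI) auto
qed

lemma sum_shifted_coeff:
  fixes p :: "'a::semiring_0 poly"
  assumes "c + degree p < N"
  shows "(\<Sum>r<N. (if c \<le> r then coeff p (r - c) else 0) * g r) = (\<Sum>d\<le>degree p. coeff p d * g (c + d))"
proof -
  have "(\<Sum>d\<le>degree p. coeff p d * g (c + d)) = (\<Sum>r\<in>(+) c ` {..degree p}. coeff p (r - c) * g r)"
    by (simp add: sum.reindex)
  also have "\<dots> = (\<Sum>r<N. (if c \<le> r then coeff p (r - c) else 0) * g r)"
  proof (rule sum.mono_neutral_cong_left)
    show "(+) c ` {..degree p} \<subseteq> {..<N}" using assms by auto
    show "\<forall>r\<in>{..<N} - (+) c ` {..degree p}. (if c \<le> r then coeff p (r - c) else 0) * g r = 0"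
    proof
      fix r assume "r \<in> {..<N} - (+) c ` {..degree p}"
      then have "c \<le> r \<Longrightarrow> degree p < r - c"
        by (metis DiffD2 atMost_iff image_eqI le_add_diff_inverse not_le)
      then show "(if c \<le> r then coeff p (r - c) else 0) * g r = 0"
        by (simp add: coeff_eq_0)
    qed
  qed auto
  finally show ?thesis ..
qed

definition recurrence_solution :: "'a::comm_semiring_0 poly \<Rightarrow> (nat \<Rightarrow> 'a) \<Rightarrow> bool" where
  "recurrence_solution p g \<longleftrightarrow> (\<forall>c. (\<Sum>d\<le>degree p. coeff p d * g (c + d)) = 0)"

lemma poly_mult_mat_orthogonal_recurrence_solution:
  fixes p :: "'a::comm_ring_1 poly"
  assumes "recurrence_solution p g" "degree p \<le> m" "dim_vec v = n"
  shows "(\<Sum>r<n + m. (poly_mult_mat (n + m) n p *\<^sub>v v) $ r * g r) = 0"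
proof -
  have "(\<Sum>r<n + m. (poly_mult_mat (n + m) n p *\<^sub>v v) $ r * g r)
      = (\<Sum>c<n. v $ c * (\<Sum>r<n + m. (if c \<le> r then coeff p (r - c) else 0) * g r))"
    using assms(3) by (simp add: poly_mult_mat_mult_vec_index sum_distrib_left sum_distrib_right
        mult_ac sum.swap[where A = "{..<n+m}"])
  also have "\<dots> = (\<Sum>c<n. v $ c * (\<Sum>d\<le>degree p. coeff p d * g (c + d)))"
    using assms(2) by (intro sum.cong refl) (simp add: sum_shifted_coeff)
  also have "\<dots> = 0"
    using assms(1) by (simp add: recurrence_solution_def)
  finally show ?thesis .
qed

lemma det_poly_mult_mat_delete_rows_neq_0:
  fixes p :: "'a::idom poly"
  assumes "coeff p 0 \<noteq> 0" "degree p \<le> m" "D \<subseteq> {..<n + m}" "card D = m"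
    and separating: "\<And>w. (\<And>g. recurrence_solution p g \<Longrightarrow> (\<Sum>r\<in>D. w r * g r) = 0)
      \<Longrightarrow> \<forall>r\<in>D. w r = 0"
  shows "det (submatrix (poly_mult_mat (n + m) n p) ({0..<n + m} - D) {0..<n}) \<noteq> 0"
proof
  assume det: "det (submatrix (poly_mult_mat (n + m) n p) ({0..<n + m} - D) {0..<n}) = 0"
  define I where "I = {0..<n + m} - D"
  have "card I = n"
    using assms(3,4) finite_subset[OF assms(3)] unfolding I_def
    by (simp add: card_Diff_subset lessThan_atLeast0)
  moreover have "poly_mult_mat (n + m) n p \<in> carrier_mat (n + m) n" "I \<subseteq> {..<n + m}"
    by (auto simp: poly_mult_mat_def I_def)
  ultimately obtain v where v: "v \<in> carrier_vec n" "v \<noteq> 0\<^sub>v n"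
    and vI: "\<And>r. r \<in> I \<Longrightarrow> (poly_mult_mat (n + m) n p *\<^sub>v v) $ r = 0"
    using singular_row_submatrix_obtains_kernel_vec det unfolding I_def by metis
  define w where "w r = (poly_mult_mat (n + m) n p *\<^sub>v v) $ r" for r
  have "(\<Sum>r\<in>D. w r * g r) = 0" if "recurrence_solution p g" for g
  proof -
    have "(\<Sum>r\<in>D. w r * g r) = (\<Sum>r<n + m. w r * g r)"
      using vI assms(3) by (intro sum.mono_neutral_left) (auto simp: w_def I_def)
    also have "\<dots> = 0"
      unfolding w_def using that assms(2) v(1)
      by (intro poly_mult_mat_orthogonal_recurrence_solution) auto
    finally show ?thesis .
  qed
  then have "\<forall>r\<in>D. w r = 0"
    by (rule separating)
  then have "w r = 0" if "r < n + m" for r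
    using vI that by (cases "r \<in> I") (auto simp: w_def I_def)
  then have "v = 0\<^sub>v n"
    using assms(1) v(1) by (intro poly_mult_mat_mult_vec_eq_0[of p n "n + m"]) (auto simp: w_def)
  with v(2) show False ..
qed

lemma recurrence_solution_power:
  fixes p :: "'a::comm_ring_1 poly"
  assumes "poly p x = 0"
  shows "recurrence_solution p (\<lambda>c. x ^ c)"
proof -
  have "(\<Sum>d\<le>degree p. coeff p d * x ^ (c + d)) = x ^ c * poly p x" for c
    by (simp add: poly_altdef sum_distrib_left power_add mult_ac)
  then show ?thesis
    using assms by (simp add: recurrence_solution_def)
qed

lemma recurrence_solution_cubic_iff:
  fixes a :: "'a::comm_ring_1"
  shows "recurrence_solution [:1, -a, a, -1:] g
    \<longleftrightarrow> (\<forall>c. g c - a * g (c + 1) + a * g (c + 2) - g (c + 3) = 0)"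
  by (simp add: recurrence_solution_def numeral_3_eq_3 algebra_simps)

lemma poly_cubic_factor:
  fixes a x :: "'a::comm_ring_1"
  shows "poly [:1, -a, a, -1:] x = (1 - x) * (x^2 - (a - 1) * x + 1)"
  by (simp add: algebra_simps power2_eq_square)

lemma quadratic_reciprocal_root_gt_1:
  fixes b :: real
  assumes "b > 2"
  obtains \<rho> where "\<rho> > 1" "\<rho>^2 - b * \<rho> + 1 = 0"
proof
  define s where "s = sqrt (b^2 - 4)"
  have "2 * 2 < b * b"
    using assms by (intro mult_strict_mono) auto
  then have s: "s^2 = b^2 - 4" "s \<ge> 0"
    by (simp_all add: s_def power2_eq_square)
  show "(b + s) / 2 > 1"
    using assms s(2) by simp
  show "((b + s) / 2)^2 - b * ((b + s) / 2) + 1 = 0"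
    using s(1) by (simp add: field_simps power2_eq_square)
qed

lemma cubic_recurrence_solutions_separate:
  fixes a x y z :: real
  assumes "a \<ge> 3" "i < j" "j < k"
    and orth: "\<And>g. recurrence_solution [:1, -a, a, -1:] g \<Longrightarrow> x * g i + y * g j + z * g k = 0"
  shows "x = 0 \<and> y = 0 \<and> z = 0"
proof (cases "a = 3")
  case True
  have "recurrence_solution [:1, -a, a, -1:] (\<lambda>_. 1)"
    "recurrence_solution [:1, -a, a, -1:] real"
    "recurrence_solution [:1, -a, a, -1:] (\<lambda>c. (real c)^2)"
    using True by (simp_all add: recurrence_solution_cubic_iff algebra_simps power2_eq_square)
  then have "x + y + z = 0" "x * i + y * j + z * k = 0"
    "x * (real i)^2 + y * (real j)^2 + z * (real k)^2 = 0"
    using orth by fastforce+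
  then show ?thesis
    using assms(2,3) by (intro vandermonde3_eq_0) auto
next
  case False
  then obtain \<rho> where \<rho>: "\<rho> > 1" "\<rho>^2 - (a - 1) * \<rho> + 1 = 0"
    using assms(1) quadratic_reciprocal_root_gt_1[of "a - 1"] by auto
  have "(1 / \<rho>)^2 - (a - 1) * (1 / \<rho>) + 1 = (\<rho>^2 - (a - 1) * \<rho> + 1) / \<rho>^2"
    using \<rho>(1) by (simp add: field_simps power2_eq_square)
  then have "r^2 - (a - 1) * r + 1 = 0" if "r \<in> {\<rho>, 1 / \<rho>}" for r
    using that \<rho>(2) by auto
  then have "poly [:1, -a, a, -1:] r = 0" if "r \<in> {1, \<rho>, 1 / \<rho>}" for r
    using that unfolding poly_cubic_factor by fastforce
  then have sol: "recurrence_solution [:1, -a, a, -1:] (\<lambda>c. r ^ c)" if "r \<in> {1, \<rho>, 1 / \<rho>}" for r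
    using that by (simp add: recurrence_solution_power)
  define X Y Z where "X = \<rho>^i" and "Y = \<rho>^j" and "Z = \<rho>^k"
  \<comment> \<open>Dividing by X, Y, Z turns the three relations into a Vandermonde system at X < Y < Z.\<close>
  from orth[OF sol[of 1]] orth[OF sol[of \<rho>]] orth[OF sol[of "1 / \<rho>"]]
  have "x + y + z = 0" "x * X + y * Y + z * Z = 0" "x / X + y / Y + z / Z = 0"
    by (simp_all add: X_def Y_def Z_def power_one_over)
  moreover have "0 < X" "X < Y" "Y < Z"
    unfolding X_def Y_def Z_def using \<rho>(1) assms(2,3) by simp_all
  ultimately have "x / X = 0 \<and> y / Y = 0 \<and> z / Z = 0"
    by (intro vandermonde3_eq_0[of X Y Z]) (simp_all add: power2_eq_square)
  then show ?thesis
    using \<open>0 < X\<close> \<open>X < Y\<close> \<open>Y < Z\<close> by auto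
qed

lemma B_mat_eq_poly_mult_mat: "B_mat n a = poly_mult_mat (n + 3) n [:1, -a, a, -1:]"
proof (rule eq_matI)
  fix r c assume "r < dim_row (poly_mult_mat (n + 3) n [:1, -a, a, -1:])"
    "c < dim_col (poly_mult_mat (n + 3) n [:1, -a, a, -1:])"
  then have rc: "r < n + 3" "c < n" by (simp_all add: poly_mult_mat_def)
  have coeff: "coeff [:1, -a, a, -1:] d = (if d = 0 then 1 else if d = 1 then -a
      else if d = 2 then a else if d = 3 then -1 else 0)" for d
    by (simp add: coeff_pCons numeral_eq_Suc split: nat.split)
  consider "r = 0" | "0 < r" "r \<le> n + 1" | "r = n + 2"
    using rc by linarith
  then show "B_mat n a $$ (r, c) = poly_mult_mat (n + 3) n [:1, -a, a, -1:] $$ (r, c)"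
  proof cases
    case 1
    then show ?thesis using rc by (simp add: B_mat_def poly_mult_mat_def coeff)
  next
    case 2
    then show ?thesis using rc by (auto simp: B_mat_def E_mat_def poly_mult_mat_def coeff)
  next
    case 3
    then show ?thesis using rc by (auto simp: B_mat_def poly_mult_mat_def coeff)
  qed
qed (simp_all add: B_mat_def poly_mult_mat_def)

theorem proposition5p1:
  fixes n :: nat and a :: real and i j k :: nat
  assumes "a = 3 \<or> a > 5"
    and "1 \<le> i" and "i < j" and "j < k" and "k \<le> n + 3"
  shows "det (B_del n a i j k) \<noteq> 0"
proof -
  let ?D = "{i - 1, j - 1, k - 1}"
  have ord: "i - 1 < j - 1" "j - 1 < k - 1"
    using assms(2-4) by auto
  have D: "?D \<subseteq> {..<n + 3}" "card ?D = 3"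
    using assms(2-5) by (auto simp: card_insert_if)
  have "\<forall>r\<in>?D. w r = 0"
    if "\<And>g. recurrence_solution [:1, -a, a, -1:] g \<Longrightarrow> (\<Sum>r\<in>?D. w r * g r) = 0" for w
    using cubic_recurrence_solutions_separate[of a "i - 1" "j - 1" "k - 1"
        "w (i - 1)" "w (j - 1)" "w (k - 1)"] assms(1) ord that
    by (auto simp: add.assoc)
  then show ?thesis
    using det_poly_mult_mat_delete_rows_neq_0[of "[:1, -a, a, -1:]" 3 ?D n] D
    unfolding B_del_def B_mat_eq_poly_mult_mat by simp
qed

end
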